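(* Let $\vec{S}$ be a signed digraph on $n$ vertices with no self-loops and no dual edges, and suppose $\vec{S}$ is cycle-disjoint. For $k=3,\ldots,n$ let $c_k^+$ (resp. $c_k^-$) be the number of positive (resp. negative) cycles of length $k$ in $\vec{S}$, and let $n_{\textrm{cyc}}=\sum_{k} k\,(c_k^+ + c_k^-)$ be the number of vertices lying on a cycle. Then the eigenvalue spectrum (as a multiset) of the adjacency matrix $\mathbf{A}$ of $\vec{S}$ consists of the eigenvalue $0$ with multiplicity $n-n_{\textrm{cyc}}$, together with the union, over $k=3,\ldots,n$, of $c_k^+$ copies of the $k$-th roots of unity and $c_k^-$ copies of the $k$-th roots of $-1$.
   Context: A signed digraph is a directed graph on vertex set $\{v_1,\ldots,v_n\}$ in which each edge $v_i\to v_j$ carries a sign $\sigma_{ij}\in\{-1,+1\}$. Its adjacency matrix $\mathbf{A}=(a_{ij})$ has $a_{ij}=\sigma_{ij}$ if $v_i\to v_j$ is an edge and $a_{ij}=0$ otherwise. No self-loops means $v_i\to v_i$ is never an edge; no dual edges means that if $v_i\to v_j$ is an edge then $v_j\to v_i$ is not. A cycle of length $k$ is a directed path of length $k$ from a vertex back to itself that visits no vertex twice (other than start/end), respecting edge directions; it is positive (negative) if the product of the signs of its edges is $+1$ ($-1$). $\vec{S}$ is cycle-disjoint if every vertex lies on at most one cycle. *)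

theory Defs
  imports "Jordan_Normal_Form.Char_Poly" "HOL-Computational_Algebra.Polynomial"
begin

text \<open>A signed digraph on vertices 0..n-1 is given by its adjacency matrix A (an n x n
  integer matrix with entries in {-1,0,1}); v_i -> v_j is an edge iff A(i,j) is nonzero,
  and then its sign is A(i,j).\<close>

definition signed_adj :: "nat \<Rightarrow> int mat \<Rightarrow> bool" where
  "signed_adj n A \<longleftrightarrow> A \<in> carrier_mat n n \<and>
     (\<forall>i<n. \<forall>j<n. A $$ (i,j) \<in> {-1, 0, 1})"

definition is_edge :: "int mat \<Rightarrow> nat \<Rightarrow> nat \<Rightarrow> bool" where
  "is_edge A i j \<longleftrightarrow> A $$ (i,j) \<noteq> 0"

definition no_self_loops :: "nat \<Rightarrow> int mat \<Rightarrow> bool" where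
  "no_self_loops n A \<longleftrightarrow> (\<forall>i<n. \<not> is_edge A i i)"

definition no_dual_edges :: "nat \<Rightarrow> int mat \<Rightarrow> bool" where
  "no_dual_edges n A \<longleftrightarrow> (\<forall>i<n. \<forall>j<n. is_edge A i j \<longrightarrow> \<not> is_edge A j i)"

definition cycle_list :: "nat \<Rightarrow> int mat \<Rightarrow> nat list \<Rightarrow> bool" where
  "cycle_list n A xs \<longleftrightarrow> xs \<noteq> [] \<and> distinct xs \<and> set xs \<subseteq> {..<n} \<and>
     (\<forall>i<length xs. is_edge A (xs ! i) (xs ! ((i + 1) mod length xs)))"

definition cycle_edges :: "nat list \<Rightarrow> (nat \<times> nat) set" where
  "cycle_edges xs = {(xs ! i, xs ! ((i + 1) mod length xs)) | i. i < length xs}"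

text \<open>A cycle is identified with its edge set (this identifies the rotations of a vertex list).\<close>

definition cycles :: "nat \<Rightarrow> int mat \<Rightarrow> (nat \<times> nat) set set" where
  "cycles n A = {cycle_edges xs | xs. cycle_list n A xs}"

definition cycle_vertices :: "(nat \<times> nat) set \<Rightarrow> nat set" where
  "cycle_vertices C = fst ` C"

definition cycle_sign :: "int mat \<Rightarrow> (nat \<times> nat) set \<Rightarrow> int" where
  "cycle_sign A C = (\<Prod>e\<in>C. A $$ e)"

definition cycles_of_len :: "nat \<Rightarrow> int mat \<Rightarrow> nat \<Rightarrow> int \<Rightarrow> (nat \<times> nat) set set" where
  "cycles_of_len n A k s = {C \<in> cycles n A. card C = k \<and> cycle_sign A C = s}"

definition cpos :: "nat \<Rightarrow> int mat \<Rightarrow> nat \<Rightarrow> nat" where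
  "cpos n A k = card (cycles_of_len n A k 1)"

definition cneg :: "nat \<Rightarrow> int mat \<Rightarrow> nat \<Rightarrow> nat" where
  "cneg n A k = card (cycles_of_len n A k (-1))"

definition cycle_disjoint :: "nat \<Rightarrow> int mat \<Rightarrow> bool" where
  "cycle_disjoint n A \<longleftrightarrow>
     (\<forall>v<n. \<forall>C1\<in>cycles n A. \<forall>C2\<in>cycles n A.
        v \<in> cycle_vertices C1 \<longrightarrow> v \<in> cycle_vertices C2 \<longrightarrow> C1 = C2)"

definition spectrum_mset :: "int mat \<Rightarrow> complex multiset" where
  "spectrum_mset A = proots (char_poly (map_mat complex_of_int A))"

definition roots_of_unity :: "nat \<Rightarrow> complex multiset" where
  "roots_of_unity k = proots (monom 1 k - 1)"

definition roots_of_minus_one :: "nat \<Rightarrow> complex multiset" where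
  "roots_of_minus_one k = proots (monom 1 k + 1)"

end

theory Submission
  imports Defs "HOL-Combinatorics.Cycles"
begin

text \<open>In the Leibniz expansion of det (X I - A) a permutation p contributes only if every point
  it moves goes along an edge i \<rightarrow> p i. Then every nontrivial orbit of p is a cycle of the
  digraph, and since the cycles are vertex-disjoint these permutations correspond exactly to the
  sets T of cycles. The term of T is X^(n - |V(T)|) times the product of -sign C over C \<in> T: the
  sign (-1)^(|C|-1) of a |C|-cycle cancels against the factor (-1)^|C| coming from the
  off-diagonal entries -a_ij of X I - A. Summing over all T, the characteristic polynomial factors
  as X^(n - n_cyc) times the product of X^|C| - sign C over all cycles C.\<close>

section \<open>Cyclic permutations\<close>

lemma sign_cycle_of_list:
  "distinct xs \<Longrightarrow> xs \<noteq> [] \<Longrightarrow> sign (cycle_of_list xs) = (-1::int) ^ (length xs - 1)"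
proof (induction xs rule: cycle_of_list.induct)
  case (1 i j cs)
  have "sign (cycle_of_list (i # j # cs)) = sign (transpose i j \<circ> cycle_of_list (j # cs))"
    by (simp only: cycle_of_list.simps)
  also have "\<dots> = sign (transpose i j) * sign (cycle_of_list (j # cs))"
    by (rule sign_compose[OF permutation_swap_id permutation_of_cycle])
  also have "\<dots> = - ((-1) ^ length cs)"
    using 1 by (simp add: sign_swap_id)
  finally show ?case
    by (simp del: cycle_of_list.simps)
qed simp_all

lemma cycle_of_list_nth:
  assumes "distinct xs" and "j < length xs"
  shows "cycle_of_list xs (xs ! j) = xs ! (Suc j mod length xs)"
proof -
  have "map (cycle_of_list xs) xs = rotate 1 xs"
    using cyclic_rotation[OF assms(1), of 1] by simp
  then have "cycle_of_list xs (xs ! j) = rotate 1 xs ! j"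
    using assms(2) by (metis nth_map)
  then show ?thesis
    using assms(2) by (simp add: nth_rotate1)
qed

lemma support_nth_Suc_mod:
  assumes "permutation p" and "j < length (support p i)"
  shows "support p i ! (Suc j mod length (support p i)) = p (support p i ! j)"
proof (cases "Suc j < length (support p i)")
  case False
  then have L: "least_power p i = Suc j"
    using assms(2) by simp
  then have wrap: "Suc j mod length (support p i) = 0"
    by simp
  have "p ((p ^^ j) i) = i"
    using least_power_of_permutation(1)[OF assms(1), of i] L by simp
  moreover have "support p i ! 0 = i" and "support p i ! j = (p ^^ j) i"
    using assms(2) by auto
  ultimately show ?thesis
    by (simp only: wrap)
qed (use assms(2) in simp)

lemma edge_in_cycle_edges_support:
  assumes "permutation p" and "p i \<noteq> i"
  shows "(i, p i) \<in> cycle_edges (support p i)"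
proof -
  have "length (support p i) > 1"
    using least_power_gt_one[OF assms] by simp
  then have "(support p i ! 0, support p i ! (Suc 0 mod length (support p i)))
      \<in> cycle_edges (support p i)"
    unfolding cycle_edges_def by (intro CollectI exI[of _ 0]) simp
  then show ?thesis
    using support_nth_Suc_mod[OF assms(1), of 0 i] \<open>length (support p i) > 1\<close> by simp
qed

lemma Suc_mod_closed_eq_lessThan:
  fixes L :: nat
  assumes "a \<in> I" and "I \<subseteq> {..<L}" and "\<And>j. j \<in> I \<Longrightarrow> Suc j mod L \<in> I"
  shows "I = {..<L}"
proof
  have "a < L"
    using assms(1,2) by auto
  have reach: "(a + m) mod L \<in> I" for m
  proof (induction m)
    case 0
    show ?case using assms(1) \<open>a < L\<close> by simp
  next
    case (Suc m)
    then have "Suc ((a + m) mod L) mod L \<in> I"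
      by (rule assms(3))
    then show ?case
      by (simp add: mod_Suc_eq)
  qed
  show "{..<L} \<subseteq> I"
  proof
    fix b assume "b \<in> {..<L}"
    then have "(a + (b + L - a)) mod L = b"
      using \<open>a < L\<close> by simp
    then show "b \<in> I"
      using reach by metis
  qed
qed (rule assms(2))

lemma sum_Pow_power_mult_prod:
  fixes x :: "'a::comm_ring_1" and w :: "'b \<Rightarrow> nat"
  assumes "finite S" and "sum w S \<le> m"
  shows "(\<Sum>T\<in>Pow S. x ^ (m - sum w T) * (\<Prod>s\<in>T. - c s))
       = x ^ (m - sum w S) * (\<Prod>s\<in>S. x ^ w s - c s)"
proof -
  have "x ^ (m - sum w S) * (\<Prod>s\<in>S. x ^ w s - c s)
      = x ^ (m - sum w S) * (\<Prod>s\<in>S. - c s + x ^ w s)"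
    by simp
  also have "\<dots> = (\<Sum>T\<in>Pow S. x ^ (m - sum w S) * ((\<Prod>s\<in>T. - c s) * x ^ sum w (S - T)))"
    by (simp only: prod_add[OF assms(1)] sum_distrib_left power_sum)
  also have "\<dots> = (\<Sum>T\<in>Pow S. x ^ (m - sum w T) * (\<Prod>s\<in>T. - c s))"
  proof (rule sum.cong)
    fix T assume "T \<in> Pow S"
    then have "T \<subseteq> S" by simp
    then have "sum w (S - T) = sum w S - sum w T" and "sum w T \<le> sum w S"
      using assms(1) by (auto intro: sum_diff_nat finite_subset sum_mono2)
    then have "m - sum w S + sum w (S - T) = m - sum w T"
      using assms(2) by linarith
    then show "x ^ (m - sum w S) * ((\<Prod>s\<in>T. - c s) * x ^ sum w (S - T))
        = x ^ (m - sum w T) * (\<Prod>s\<in>T. - c s)"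
      by (metis (no_types, lifting) mult.assoc mult.commute power_add)
  qed simp
  finally show ?thesis ..
qed

lemma prod_const_poly: "(\<Prod>x\<in>S. [:f x:]) = [:\<Prod>x\<in>S. f x:]"
  by (induction S rule: infinite_finite_induct) (auto simp: mult.commute)

lemma prod_in_plus_minus_one:
  "(\<And>x. x \<in> S \<Longrightarrow> f x \<in> {1, -1::int}) \<Longrightarrow> prod f S \<in> {1, -1}"
proof (induction S rule: infinite_finite_induct)
  case (insert x F)
  then have "f x \<in> {1, -1}" and "prod f F \<in> {1, -1}"
    by auto
  then show ?case
    using insert.hyps by auto
qed auto

lemma sum_const_multiset: "(\<Sum>x\<in>S. M) = repeat_mset (card S) M"
  by (induction S rule: infinite_finite_induct) auto

lemma proots_pX_power: "proots ([:0, 1:] ^ m :: 'a::idom poly) = replicate_mset m 0"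
  using proots_linear_factor[of "0::'a"] by (simp add: proots_power)

lemma pX_power_minus_const_nonzero:
  assumes "k \<ge> 1"
  shows "[:0, 1:] ^ k - [:c:] \<noteq> (0 :: 'a::comm_ring_1 poly)"
proof
  assume "[:0, 1:] ^ k - [:c:] = (0 :: 'a poly)"
  then have "coeff ([:0, 1:] ^ k - [:c:]) k = (0 :: 'a)"
    by simp
  with assms show False
    by (simp add: monom_altdef[symmetric] coeff_pCons split: nat.splits)
qed

lemma proots_pX_power_minus_sign:
  assumes "s \<in> {1, -1}"
  shows "proots ([:0, 1:] ^ k - [:complex_of_int s:])
       = (if s = 1 then roots_of_unity k else roots_of_minus_one k)"
proof -
  have "[:complex_of_int s:] = of_int s"
    by (simp add: of_int_poly)
  then show ?thesis
    using assms by (auto simp: roots_of_unity_def roots_of_minus_one_def monom_altdef)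
qed

section \<open>Cycles as edge sets\<close>

lemma cycle_edges_conv_image:
  "cycle_edges xs = (\<lambda>i. (xs ! i, xs ! (Suc i mod length xs))) ` {..<length xs}"
  unfolding cycle_edges_def by auto

lemma card_cycle_edges: "distinct xs \<Longrightarrow> card (cycle_edges xs) = length xs"
  unfolding cycle_edges_conv_image
  by (subst card_image) (auto simp: inj_on_def nth_eq_iff_index_eq)

lemma cycle_vertices_cycle_edges: "cycle_vertices (cycle_edges xs) = set xs"
  unfolding cycle_vertices_def cycle_edges_conv_image image_image by (auto simp: set_conv_nth)

lemma mem_cycle_vertices_if_edge: "(i, j) \<in> C \<Longrightarrow> i \<in> cycle_vertices C"
  unfolding cycle_vertices_def by (metis fst_conv image_eqI)

lemma target_in_set_if_in_cycle_edges: "(a, b) \<in> cycle_edges xs \<Longrightarrow> b \<in> set xs"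
  unfolding cycle_edges_conv_image by (auto intro!: nth_mem mod_less_divisor)

lemma cycle_edges_functional:
  "distinct xs \<Longrightarrow> (a, b) \<in> cycle_edges xs \<Longrightarrow> (a, b') \<in> cycle_edges xs \<Longrightarrow> b = b'"
  unfolding cycle_edges_conv_image by (auto simp: nth_eq_iff_index_eq)

lemma is_edge_if_in_cycle_edges:
  "cycle_list n A xs \<Longrightarrow> (a, b) \<in> cycle_edges xs \<Longrightarrow> is_edge A a b"
  unfolding cycle_list_def cycle_edges_conv_image by auto

lemma cycle_edges_subset:
  assumes "cycle_list n A xs"
  shows "cycle_edges xs \<subseteq> {..<n} \<times> {..<n}"
proof (rule subrelI)
  fix a b assume e: "(a, b) \<in> cycle_edges xs"
  have "a \<in> set xs"
    using mem_cycle_vertices_if_edge[OF e] by (simp add: cycle_vertices_cycle_edges)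
  moreover have "b \<in> set xs"
    using e by (rule target_in_set_if_in_cycle_edges)
  ultimately show "(a, b) \<in> {..<n} \<times> {..<n}"
    using assms unfolding cycle_list_def by auto
qed

definition moves_along_edges :: "int mat \<Rightarrow> (nat \<Rightarrow> nat) \<Rightarrow> bool" where
  "moves_along_edges A p \<longleftrightarrow> (\<forall>j. p j \<noteq> j \<longrightarrow> is_edge A j (p j))"

lemma cycle_list_support:
  assumes p: "p permutes {..<n}" and along: "moves_along_edges A p" and "p i \<noteq> i"
  shows "cycle_list n A (support p i)"
  unfolding cycle_list_def
proof (intro conjI allI impI)
  have perm: "permutation p"
    using p by (rule permutes_imp_permutation[rotated]) simp
  have len: "length (support p i) > 1"
    using least_power_gt_one[OF perm \<open>p i \<noteq> i\<close>] by simp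
  then show "support p i \<noteq> []"
    by auto
  show "distinct (support p i)"
    using cycle_of_permutation[OF perm] .
  have "i < n"
    using p \<open>p i \<noteq> i\<close> by (meson lessThan_iff permutes_not_in)
  then show "set (support p i) \<subseteq> {..<n}"
    using permutes_in_image[OF permutes_funpow[OF p]] by auto
  fix j assume j: "j < length (support p i)"
  have "Suc j mod length (support p i) \<noteq> j"
  proof (cases "Suc j < length (support p i)")
    case False
    then have "length (support p i) = Suc j"
      using j by simp
    then show ?thesis
      using len by simp
  qed simp
  moreover have "Suc j mod length (support p i) < length (support p i)"
    using j by simp
  ultimately have "support p i ! (Suc j mod length (support p i)) \<noteq> support p i ! j"
    using j \<open>distinct (support p i)\<close> nth_eq_iff_index_eq by metis
  then have "p (support p i ! j) \<noteq> support p i ! j"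
    using support_nth_Suc_mod[OF perm j] by metis
  then show "is_edge A (support p i ! j) (support p i ! ((j + 1) mod length (support p i)))"
    using along support_nth_Suc_mod[OF perm j] unfolding moves_along_edges_def by simp
qed

section \<open>Cycle-disjoint signed digraphs\<close>

locale cycle_disjoint_signed_digraph =
  fixes n :: nat and A :: "int mat"
  assumes signed: "signed_adj n A"
    and loopless: "no_self_loops n A"
    and no_dual: "no_dual_edges n A"
    and disjoint: "cycle_disjoint n A"
begin

abbreviation Cyc :: "(nat \<times> nat) set set" where
  "Cyc \<equiv> cycles n A"

lemma cyclesE:
  assumes "C \<in> Cyc"
  obtains xs where "cycle_list n A xs" and "C = cycle_edges xs"
  using assms unfolding cycles_def by auto

lemma finite_cycles: "finite Cyc"
proof (rule finite_subset)
  show "Cyc \<subseteq> Pow ({..<n} \<times> {..<n})"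
    using cycle_edges_subset unfolding cycles_def by auto
qed auto

lemma cycle_vertices_subset: "C \<in> Cyc \<Longrightarrow> cycle_vertices C \<subseteq> {..<n}"
  by (erule cyclesE) (auto simp: cycle_vertices_cycle_edges cycle_list_def)

lemma cycle_eq_if_common_vertex:
  "C1 \<in> Cyc \<Longrightarrow> C2 \<in> Cyc \<Longrightarrow> v \<in> cycle_vertices C1 \<Longrightarrow> v \<in> cycle_vertices C2 \<Longrightarrow> C1 = C2"
  using disjoint cycle_vertices_subset unfolding cycle_disjoint_def by blast

lemma finite_cycle_vertices: "C \<in> Cyc \<Longrightarrow> finite (cycle_vertices C)"
  using cycle_vertices_subset finite_subset by blast

lemma cycle_vertices_disjoint:
  "C1 \<in> Cyc \<Longrightarrow> C2 \<in> Cyc \<Longrightarrow> C1 \<noteq> C2 \<Longrightarrow> cycle_vertices C1 \<inter> cycle_vertices C2 = {}"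
  using cycle_eq_if_common_vertex by blast

lemma card_cycle_vertices: "C \<in> Cyc \<Longrightarrow> card (cycle_vertices C) = card C"
  by (erule cyclesE) (auto simp: cycle_vertices_cycle_edges card_cycle_edges cycle_list_def distinct_card)

lemma card_cycle_ge_3:
  assumes "C \<in> Cyc"
  shows "card C \<ge> 3"
proof -
  obtain xs where xs: "cycle_list n A xs" and C: "C = cycle_edges xs"
    using assms by (rule cyclesE)
  then have "distinct xs" and "xs \<noteq> []" and "set xs \<subseteq> {..<n}"
    and edge: "\<And>i. i < length xs \<Longrightarrow> is_edge A (xs ! i) (xs ! (Suc i mod length xs))"
    unfolding cycle_list_def by auto
  have "length xs \<noteq> 1"
  proof
    assume "length xs = 1"
    then have "is_edge A (xs ! 0) (xs ! 0)" and "xs ! 0 < n"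
      using edge[of 0] \<open>set xs \<subseteq> {..<n}\<close> by (auto simp: subset_iff)
    then show False
      using loopless unfolding no_self_loops_def by blast
  qed
  moreover have "length xs \<noteq> 2"
  proof
    assume "length xs = 2"
    then have "is_edge A (xs ! 0) (xs ! 1)" and "is_edge A (xs ! 1) (xs ! 0)"
      and "xs ! 0 < n" and "xs ! 1 < n"
      using edge[of 0] edge[of 1] \<open>set xs \<subseteq> {..<n}\<close> by (auto simp: subset_iff)
    then show False
      using no_dual unfolding no_dual_edges_def by blast
  qed
  moreover have "card C = length xs"
    using card_cycle_edges[OF \<open>distinct xs\<close>] C by simp
  moreover have "length xs \<noteq> 0"
    using \<open>xs \<noteq> []\<close> by simp
  ultimately show ?thesis
    by linarith
qed

lemma card_cycle_le: "C \<in> Cyc \<Longrightarrow> card C \<le> n"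
  using card_cycle_vertices[of C] cycle_vertices_subset[of C]
  by (metis card_lessThan card_mono finite_lessThan)

lemma entry_nonzero_if_in_cycle: "C \<in> Cyc \<Longrightarrow> e \<in> C \<Longrightarrow> A $$ e \<noteq> 0"
  by (erule cyclesE) (metis is_edge_if_in_cycle_edges is_edge_def surj_pair)

lemma cycle_sign_in_plus_minus_one:
  assumes "C \<in> Cyc"
  shows "cycle_sign A C \<in> {1, -1}"
  unfolding cycle_sign_def
proof (rule prod_in_plus_minus_one)
  fix e assume "e \<in> C"
  moreover have "C \<subseteq> {..<n} \<times> {..<n}"
    using assms by (metis cyclesE cycle_edges_subset)
  ultimately have "A $$ e \<in> {-1, 0, 1}"
    using signed unfolding signed_adj_def by auto
  then show "A $$ e \<in> {1, -1}"
    using entry_nonzero_if_in_cycle[OF assms \<open>e \<in> C\<close>] by auto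
qed

text \<open>The successor of a vertex on a cycle, unique by cycle-disjointness; its value on other
  vertices is unspecified and never used.\<close>

definition succ :: "nat \<Rightarrow> nat" where
  "succ i = (SOME j. \<exists>C\<in>Cyc. (i, j) \<in> C)"

lemma succ_in_cycle:
  assumes C: "C \<in> Cyc" and i: "i \<in> cycle_vertices C"
  shows "(i, succ i) \<in> C"
proof -
  obtain j where "(i, j) \<in> C"
    using i unfolding cycle_vertices_def by auto
  then have "\<exists>j. \<exists>C\<in>Cyc. (i, j) \<in> C"
    using C by blast
  then have "\<exists>C\<in>Cyc. (i, succ i) \<in> C"
    unfolding succ_def by (rule someI_ex)
  then obtain C' where C': "C' \<in> Cyc" "(i, succ i) \<in> C'"
    by blast
  have "C' = C"
    using cycle_eq_if_common_vertex[OF C'(1) C mem_cycle_vertices_if_edge[OF C'(2)] i] .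
  with C' show ?thesis
    by simp
qed

lemma succ_unique:
  assumes C: "C \<in> Cyc" and ij: "(i, j) \<in> C"
  shows "j = succ i"
proof -
  obtain xs where xs: "cycle_list n A xs" "C = cycle_edges xs"
    using C by (rule cyclesE)
  have "(i, succ i) \<in> C"
    using mem_cycle_vertices_if_edge[OF ij]
    by (rule succ_in_cycle[OF C])
  then show ?thesis
    using cycle_edges_functional[of xs i j "succ i"] xs ij unfolding cycle_list_def by simp
qed

lemma succ_in_cycle_vertices:
  assumes C: "C \<in> Cyc" and i: "i \<in> cycle_vertices C"
  shows "succ i \<in> cycle_vertices C"
proof -
  obtain xs where xs: "cycle_list n A xs" "C = cycle_edges xs"
    using C by (rule cyclesE)
  have "(i, succ i) \<in> cycle_edges xs"
    using succ_in_cycle[OF C i] xs(2) by simp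
  then have "succ i \<in> set xs"
    by (rule target_in_set_if_in_cycle_edges)
  then show ?thesis
    using xs(2) by (simp add: cycle_vertices_cycle_edges)
qed

lemma succ_neq:
  assumes C: "C \<in> Cyc" and i: "i \<in> cycle_vertices C"
  shows "succ i \<noteq> i"
proof
  assume "succ i = i"
  then have "is_edge A i i"
    using entry_nonzero_if_in_cycle[OF C succ_in_cycle[OF C i]] by (simp add: is_edge_def)
  moreover have "i < n"
    using cycle_vertices_subset[OF C] i by auto
  ultimately show False
    using loopless unfolding no_self_loops_def by blast
qed

lemma cycle_eq_succ_image:
  assumes C: "C \<in> Cyc"
  shows "C = (\<lambda>i. (i, succ i)) ` cycle_vertices C"
proof
  show "C \<subseteq> (\<lambda>i. (i, succ i)) ` cycle_vertices C"
  proof (rule subrelI)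
    fix a b assume ab: "(a, b) \<in> C"
    then have "a \<in> cycle_vertices C"
      by (rule mem_cycle_vertices_if_edge)
    moreover have "b = succ a"
      using succ_unique[OF C ab] .
    ultimately show "(a, b) \<in> (\<lambda>i. (i, succ i)) ` cycle_vertices C"
      by blast
  qed
  show "(\<lambda>i. (i, succ i)) ` cycle_vertices C \<subseteq> C"
    using succ_in_cycle[OF C] by blast
qed

lemma succ_closed_eq_cycle_vertices:
  assumes C: "C \<in> Cyc" and "v \<in> S" and S: "S \<subseteq> cycle_vertices C"
    and closed: "\<And>u. u \<in> S \<Longrightarrow> succ u \<in> S"
  shows "S = cycle_vertices C"
proof -
  obtain xs where xs: "cycle_list n A xs" "C = cycle_edges xs"
    using C by (rule cyclesE)
  have V: "cycle_vertices C = set xs"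
    using xs(2) by (simp add: cycle_vertices_cycle_edges)
  have succ_nth: "succ (xs ! j) = xs ! (Suc j mod length xs)" if "j < length xs" for j
  proof -
    have "(xs ! j, xs ! (Suc j mod length xs)) \<in> C"
      using that xs(2) unfolding cycle_edges_conv_image by auto
    then show ?thesis
      by (rule succ_unique[OF C, symmetric])
  qed
  define I where "I = {j. j < length xs \<and> xs ! j \<in> S}"
  have "v \<in> set xs"
    using \<open>v \<in> S\<close> S V by auto
  then obtain a where "a < length xs" "xs ! a = v"
    by (auto simp: in_set_conv_nth)
  then have "a \<in> I"
    using \<open>v \<in> S\<close> unfolding I_def by simp
  then have I: "I = {..<length xs}"
  proof (rule Suc_mod_closed_eq_lessThan)
    show "I \<subseteq> {..<length xs}"
      unfolding I_def by auto
    fix j assume "j \<in> I"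
    then have "j < length xs" and "succ (xs ! j) \<in> S"
      using closed unfolding I_def by auto
    moreover have "Suc j mod length xs < length xs"
      using \<open>j < length xs\<close> by (intro mod_less_divisor) linarith
    ultimately show "Suc j mod length xs \<in> I"
      using succ_nth unfolding I_def by simp
  qed
  have "set xs \<subseteq> S"
  proof
    fix x assume "x \<in> set xs"
    then obtain j where "j < length xs" "x = xs ! j"
      by (auto simp: in_set_conv_nth)
    then show "x \<in> S"
      using I unfolding I_def by auto
  qed
  then show ?thesis
    using S V by auto
qed

definition covered :: "(nat \<times> nat) set set \<Rightarrow> nat set" where
  "covered T = (\<Union>C\<in>T. cycle_vertices C)"

definition cycle_perm :: "(nat \<times> nat) set set \<Rightarrow> nat \<Rightarrow> nat" where
  "cycle_perm T i = (if i \<in> covered T then succ i else i)"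

lemma covered_subset: "T \<subseteq> Cyc \<Longrightarrow> covered T \<subseteq> {..<n}"
  unfolding covered_def using cycle_vertices_subset by blast

lemma card_covered:
  assumes T: "T \<subseteq> Cyc"
  shows "card (covered T) = (\<Sum>C\<in>T. card C)"
proof -
  have "finite T"
    using T finite_cycles by (rule finite_subset)
  moreover have "\<forall>C\<in>T. finite (cycle_vertices C)"
    using T finite_cycle_vertices by blast
  moreover have "\<forall>C1\<in>T. \<forall>C2\<in>T. C1 \<noteq> C2 \<longrightarrow> cycle_vertices C1 \<inter> cycle_vertices C2 = {}"
    using T cycle_vertices_disjoint by blast
  ultimately have "card (covered T) = (\<Sum>C\<in>T. card (cycle_vertices C))"
    unfolding covered_def by (rule card_UN_disjoint)
  also have "\<dots> = (\<Sum>C\<in>T. card C)"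
    using T card_cycle_vertices by (intro sum.cong) auto
  finally show ?thesis .
qed

lemma cycle_perm_singleton:
  assumes xs: "cycle_list n A xs"
  shows "cycle_perm {cycle_edges xs} = cycle_of_list xs"
proof
  fix i
  have C: "cycle_edges xs \<in> Cyc"
    using xs unfolding cycles_def by auto
  have "distinct xs"
    using xs unfolding cycle_list_def by simp
  show "cycle_perm {cycle_edges xs} i = cycle_of_list xs i"
  proof (cases "i \<in> set xs")
    case True
    then obtain j where j: "j < length xs" "i = xs ! j"
      by (auto simp: in_set_conv_nth)
    then have "(i, xs ! (Suc j mod length xs)) \<in> cycle_edges xs"
      unfolding cycle_edges_conv_image by auto
    then have "succ i = cycle_of_list xs i"
      using succ_unique[OF C] cycle_of_list_nth[OF \<open>distinct xs\<close> j(1)] j(2) by simp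
    then show ?thesis
      using True unfolding cycle_perm_def covered_def by (simp add: cycle_vertices_cycle_edges)
  next
    case False
    then show ?thesis
      using id_outside_supp[OF False]
      unfolding cycle_perm_def covered_def by (simp add: cycle_vertices_cycle_edges)
  qed
qed

lemma cycle_perm_insert:
  assumes T: "T \<subseteq> Cyc" and C: "C \<in> Cyc" "C \<notin> T"
  shows "cycle_perm (insert C T) = cycle_perm {C} \<circ> cycle_perm T"
proof
  fix i
  show "cycle_perm (insert C T) i = (cycle_perm {C} \<circ> cycle_perm T) i"
  proof (cases "i \<in> covered T")
    case True
    then obtain C' where C': "C' \<in> T" "i \<in> cycle_vertices C'"
      unfolding covered_def by auto
    then have "succ i \<in> cycle_vertices C'"
      using T succ_in_cycle_vertices by blast
    then have "succ i \<notin> cycle_vertices C"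
      using cycle_eq_if_common_vertex C C' T by blast
    then show ?thesis
      using True unfolding cycle_perm_def covered_def by auto
  next
    case False
    then show ?thesis
      unfolding cycle_perm_def covered_def by auto
  qed
qed

lemma cycle_perm_permutes_and_sign:
  assumes T: "T \<subseteq> Cyc"
  shows "cycle_perm T permutes {..<n} \<and> sign (cycle_perm T) = (\<Prod>C\<in>T. (-1::int) ^ (card C - 1))"
  using finite_subset[OF T finite_cycles] T
proof (induction T rule: finite_subset_induct')
  case empty
  have "cycle_perm {} = id"
    unfolding cycle_perm_def covered_def by auto
  then show ?case
    by (auto simp: permutes_def)
next
  case (insert C T)
  obtain xs where xs: "cycle_list n A xs" and C: "C = cycle_edges xs"
    using insert.hyps(2) by (rule cyclesE)
  then have "distinct xs" "xs \<noteq> []" "set xs \<subseteq> {..<n}"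
    unfolding cycle_list_def by auto
  then have single: "cycle_perm {C} permutes {..<n}"
    "sign (cycle_perm {C}) = (-1::int) ^ (card C - 1)"
    using permutes_subset[OF cycle_permutes] sign_cycle_of_list card_cycle_edges
    unfolding C cycle_perm_singleton[OF xs] by auto
  have split: "cycle_perm (insert C T) = cycle_perm {C} \<circ> cycle_perm T"
    using insert.hyps by (intro cycle_perm_insert) auto
  have IH: "cycle_perm T permutes {..<n}" "sign (cycle_perm T) = (\<Prod>C\<in>T. (-1::int) ^ (card C - 1))"
    using insert.IH by auto
  have "cycle_perm (insert C T) permutes {..<n}"
    unfolding split by (rule permutes_compose[OF IH(1) single(1)])
  moreover have "sign (cycle_perm (insert C T)) = sign (cycle_perm {C}) * sign (cycle_perm T)"
    unfolding split
    by (rule sign_compose) (use single(1) IH(1) permutes_imp_permutation in blast)+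
  ultimately show ?case
    using single(2) IH(2) insert.hyps by simp
qed

lemma edge_in_cycle_if_moved:
  assumes p: "p permutes {..<n}" and along: "moves_along_edges A p" and "p i \<noteq> i"
  shows "\<exists>C\<in>Cyc. (i, p i) \<in> C"
proof -
  have "permutation p"
    using p by (rule permutes_imp_permutation[rotated]) simp
  then have "(i, p i) \<in> cycle_edges (support p i)"
    using edge_in_cycle_edges_support \<open>p i \<noteq> i\<close> by blast
  moreover have "cycle_edges (support p i) \<in> Cyc"
    using cycle_list_support[OF p along \<open>p i \<noteq> i\<close>] unfolding cycles_def by blast
  ultimately show ?thesis
    by blast
qed

lemma moved_eq_succ:
  assumes "p permutes {..<n}" and "moves_along_edges A p" and "p i \<noteq> i"
  shows "p i = succ i"
  using edge_in_cycle_if_moved[OF assms] succ_unique by blast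

text \<open>Cycle-disjointness is what makes a permutation moving along edges a union of whole cycles:
  a moved vertex is sent to its unique successor, and by injectivity that successor is moved too.\<close>

lemma moved_on_cycle_if_moved:
  assumes p: "p permutes {..<n}" and along: "moves_along_edges A p"
    and C: "C \<in> Cyc" and v: "v \<in> cycle_vertices C" "p v \<noteq> v" and u: "u \<in> cycle_vertices C"
  shows "p u \<noteq> u"
proof -
  have "{w \<in> cycle_vertices C. p w \<noteq> w} = cycle_vertices C"
  proof (rule succ_closed_eq_cycle_vertices[OF C])
    show "v \<in> {w \<in> cycle_vertices C. p w \<noteq> w}"
      using v by simp
    fix w assume w: "w \<in> {w \<in> cycle_vertices C. p w \<noteq> w}"
    then have "p w = succ w"
      using moved_eq_succ[OF p along] by blast
    moreover have "succ w \<noteq> w"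
      using succ_neq C w by blast
    ultimately have "p (succ w) \<noteq> succ w"
      using permutes_inj[OF p] by (metis injD)
    then show "succ w \<in> {w \<in> cycle_vertices C. p w \<noteq> w}"
      using succ_in_cycle_vertices C w by blast
  qed auto
  then show ?thesis
    using u by blast
qed

lemma eq_cycle_perm_moved_cycles:
  assumes p: "p permutes {..<n}" and along: "moves_along_edges A p"
  shows "p = cycle_perm {C \<in> Cyc. \<exists>v\<in>cycle_vertices C. p v \<noteq> v}"
proof -
  define T where "T = {C \<in> Cyc. \<exists>v\<in>cycle_vertices C. p v \<noteq> v}"
  have "p i = cycle_perm T i" for i
  proof (cases "i \<in> covered T")
    case True
    then obtain C where "C \<in> T" "i \<in> cycle_vertices C"
      unfolding covered_def by auto
    then have "p i \<noteq> i"
      using moved_on_cycle_if_moved[OF p along] unfolding T_def by blast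
    then show ?thesis
      using moved_eq_succ[OF p along] True unfolding cycle_perm_def by auto
  next
    case False
    have "p i = i"
    proof (rule ccontr)
      assume "p i \<noteq> i"
      then obtain C where "C \<in> Cyc" "(i, p i) \<in> C"
        using edge_in_cycle_if_moved[OF p along] by blast
      then have "C \<in> T" and "i \<in> cycle_vertices C"
        using \<open>p i \<noteq> i\<close> mem_cycle_vertices_if_edge unfolding T_def by auto
      then show False
        using False unfolding covered_def by blast
    qed
    then show ?thesis
      using False unfolding cycle_perm_def by simp
  qed
  then show ?thesis
    unfolding T_def by blast
qed

lemma moved_cycles_cycle_perm:
  assumes T: "T \<subseteq> Cyc"
  shows "{C \<in> Cyc. \<exists>v\<in>cycle_vertices C. cycle_perm T v \<noteq> v} = T"
proof (intro equalityI subsetI)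
  fix C assume "C \<in> {C \<in> Cyc. \<exists>v\<in>cycle_vertices C. cycle_perm T v \<noteq> v}"
  then obtain v where C: "C \<in> Cyc" and v: "v \<in> cycle_vertices C" "cycle_perm T v \<noteq> v"
    by auto
  then have "v \<in> covered T"
    unfolding cycle_perm_def by (auto split: if_splits)
  then obtain C' where "C' \<in> T" "v \<in> cycle_vertices C'"
    unfolding covered_def by auto
  then show "C \<in> T"
    using cycle_eq_if_common_vertex C v(1) T by blast
next
  fix C assume "C \<in> T"
  then have C: "C \<in> Cyc"
    using T by blast
  then have "C \<noteq> {}"
    using card_cycle_ge_3 by fastforce
  then obtain v where v: "v \<in> cycle_vertices C"
    unfolding cycle_vertices_def by auto
  then have "cycle_perm T v = succ v"
    using \<open>C \<in> T\<close> unfolding cycle_perm_def covered_def by auto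
  then have "cycle_perm T v \<noteq> v"
    using succ_neq[OF C v] by simp
  then show "C \<in> {C \<in> Cyc. \<exists>v\<in>cycle_vertices C. cycle_perm T v \<noteq> v}"
    using C v by blast
qed

lemma inj_on_cycle_perm: "inj_on cycle_perm (Pow Cyc)"
  by (rule inj_on_inverseI[of _ "\<lambda>p. {C \<in> Cyc. \<exists>v\<in>cycle_vertices C. p v \<noteq> v}"])
    (simp add: moved_cycles_cycle_perm)

subsection \<open>The characteristic polynomial\<close>

abbreviation char_matrix :: "complex poly mat" where
  "char_matrix \<equiv> char_poly_matrix (map_mat complex_of_int A)"

lemma adjacency_carrier: "A \<in> carrier_mat n n"
  using signed unfolding signed_adj_def by simp

lemma char_matrix_carrier: "char_matrix \<in> carrier_mat n n"
  using adjacency_carrier by simp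

lemma char_matrix_entry:
  "i < n \<Longrightarrow> j < n \<Longrightarrow>
    char_matrix $$ (i, j) = (if i = j then [:0, 1:] else 0) + [:- complex_of_int (A $$ (i, j)):]"
  using adjacency_carrier unfolding char_poly_matrix_def by simp

lemma char_matrix_diag: "i < n \<Longrightarrow> char_matrix $$ (i, i) = [:0, 1:]"
  using char_matrix_entry loopless unfolding no_self_loops_def is_edge_def by simp

lemma char_matrix_off_diag:
  "i < n \<Longrightarrow> j < n \<Longrightarrow> i \<noteq> j \<Longrightarrow> char_matrix $$ (i, j) = [:- complex_of_int (A $$ (i, j)):]"
  using char_matrix_entry by simp

lemma prod_char_matrix_cycle:
  assumes C: "C \<in> Cyc"
  shows "(\<Prod>i\<in>cycle_vertices C. char_matrix $$ (i, succ i))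
       = (-1) ^ card C * [:complex_of_int (cycle_sign A C):]"
proof -
  have "(\<Prod>i\<in>cycle_vertices C. char_matrix $$ (i, succ i))
      = (\<Prod>i\<in>cycle_vertices C. [:- complex_of_int (A $$ (i, succ i)):])"
  proof (rule prod.cong)
    fix i assume i: "i \<in> cycle_vertices C"
    then have "i < n" and "succ i < n"
      using cycle_vertices_subset[OF C] succ_in_cycle_vertices[OF C i] by auto
    then show "char_matrix $$ (i, succ i) = [:- complex_of_int (A $$ (i, succ i)):]"
      using char_matrix_off_diag succ_neq[OF C i] by simp
  qed simp
  also have "\<dots> = (\<Prod>e\<in>(\<lambda>i. (i, succ i)) ` cycle_vertices C. [:- complex_of_int (A $$ e):])"
    by (simp add: prod.reindex inj_on_def)
  also have "\<dots> = (\<Prod>e\<in>C. - [:complex_of_int (A $$ e):])"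
    unfolding cycle_eq_succ_image[OF C, symmetric] by simp
  also have "\<dots> = (-1) ^ card C * [:complex_of_int (cycle_sign A C):]"
    unfolding prod_uminus prod_const_poly cycle_sign_def by simp
  finally show ?thesis .
qed

lemma prod_char_matrix_uncovered:
  assumes T: "T \<subseteq> Cyc"
  shows "(\<Prod>i\<in>{..<n} - covered T. char_matrix $$ (i, cycle_perm T i)) = [:0, 1:] ^ (n - sum card T)"
proof -
  have "(\<Prod>i\<in>{..<n} - covered T. char_matrix $$ (i, cycle_perm T i))
      = (\<Prod>i\<in>{..<n} - covered T. [:0, 1:])"
    by (rule prod.cong) (auto simp: cycle_perm_def char_matrix_diag)
  also have "\<dots> = [:0, 1:] ^ (n - sum card T)"
    using card_Diff_subset[OF finite_subset[OF covered_subset[OF T]] covered_subset[OF T]]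
      card_covered[OF T] by simp
  finally show ?thesis .
qed

lemma prod_char_matrix_covered:
  assumes T: "T \<subseteq> Cyc"
  shows "(\<Prod>i\<in>covered T. char_matrix $$ (i, cycle_perm T i))
       = (\<Prod>C\<in>T. (-1) ^ card C * [:complex_of_int (cycle_sign A C):])"
proof -
  have "(\<Prod>i\<in>covered T. char_matrix $$ (i, cycle_perm T i))
      = (\<Prod>C\<in>T. \<Prod>i\<in>cycle_vertices C. char_matrix $$ (i, cycle_perm T i))"
    unfolding covered_def
  proof (rule prod.UNION_disjoint)
    show "finite T"
      using T finite_cycles by (rule finite_subset)
    show "\<forall>C\<in>T. finite (cycle_vertices C)"
      using T finite_cycle_vertices by blast
    show "\<forall>C1\<in>T. \<forall>C2\<in>T. C1 \<noteq> C2 \<longrightarrow> cycle_vertices C1 \<inter> cycle_vertices C2 = {}"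
      using T cycle_vertices_disjoint by blast
  qed
  also have "\<dots> = (\<Prod>C\<in>T. (-1) ^ card C * [:complex_of_int (cycle_sign A C):])"
  proof (rule prod.cong)
    fix C assume "C \<in> T"
    then have "(\<Prod>i\<in>cycle_vertices C. char_matrix $$ (i, cycle_perm T i))
        = (\<Prod>i\<in>cycle_vertices C. char_matrix $$ (i, succ i))"
      unfolding cycle_perm_def covered_def by (intro prod.cong) auto
    then show "(\<Prod>i\<in>cycle_vertices C. char_matrix $$ (i, cycle_perm T i))
        = (-1) ^ card C * [:complex_of_int (cycle_sign A C):]"
      using prod_char_matrix_cycle T \<open>C \<in> T\<close> by auto
  qed simp
  finally show ?thesis .
qed

lemma leibniz_term_cycle_perm:
  assumes T: "T \<subseteq> Cyc"
  shows "signof (cycle_perm T) * (\<Prod>i<n. char_matrix $$ (i, cycle_perm T i))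
       = [:0, 1:] ^ (n - sum card T) * (\<Prod>C\<in>T. - [:complex_of_int (cycle_sign A C):])"
proof -
  have sign: "signof (cycle_perm T) = (\<Prod>C\<in>T. (-1 :: complex poly) ^ (card C - 1))"
    using cycle_perm_permutes_and_sign[OF T] by simp
  have "signof (cycle_perm T) * (\<Prod>i\<in>covered T. char_matrix $$ (i, cycle_perm T i))
      = (\<Prod>C\<in>T. (-1) ^ (card C - 1) * ((-1) ^ card C * [:complex_of_int (cycle_sign A C):]))"
    unfolding prod_char_matrix_covered[OF T] sign prod.distrib ..
  also have "\<dots> = (\<Prod>C\<in>T. - [:complex_of_int (cycle_sign A C):])"
  proof (rule prod.cong)
    fix C assume "C \<in> T"
    then obtain m where "card C = Suc m"
      using T card_cycle_ge_3 by (metis Suc_le_D numeral_3_eq_3 subsetD)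
    then show "(-1) ^ (card C - 1) * ((-1) ^ card C * [:complex_of_int (cycle_sign A C):])
        = - [:complex_of_int (cycle_sign A C):]"
      by simp
  qed simp
  finally show ?thesis
    unfolding prod.subset_diff[OF covered_subset[OF T] finite_lessThan] prod_char_matrix_uncovered[OF T]
    by (simp add: ac_simps)
qed

lemma leibniz_term_vanishes:
  assumes p: "p permutes {..<n}" and "\<not> moves_along_edges A p"
  shows "(\<Prod>i<n. char_matrix $$ (i, p i)) = 0"
proof -
  obtain j where j: "p j \<noteq> j" "\<not> is_edge A j (p j)"
    using assms(2) unfolding moves_along_edges_def by blast
  then have "j < n" and "p j < n"
    using p by (meson lessThan_iff permutes_not_in permutes_in_image)+
  then have "char_matrix $$ (j, p j) = 0"
    using j char_matrix_off_diag unfolding is_edge_def by simp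
  then show ?thesis
    using \<open>j < n\<close> by (intro prod_zero) auto
qed

lemma char_poly_eq_sum_cycle_sets:
  "char_poly (map_mat complex_of_int A)
     = (\<Sum>T\<in>Pow Cyc. [:0, 1:] ^ (n - sum card T) * (\<Prod>C\<in>T. - [:complex_of_int (cycle_sign A C):]))"
proof -
  define leibniz where "leibniz p = signof p * (\<Prod>i<n. char_matrix $$ (i, p i))" for p
  have "char_poly (map_mat complex_of_int A) = (\<Sum>p\<in>{p. p permutes {..<n}}. leibniz p)"
    unfolding char_poly_def leibniz_def det_def'[OF char_matrix_carrier] atLeast0LessThan ..
  also have "\<dots> = (\<Sum>p\<in>cycle_perm ` Pow Cyc. leibniz p)"
  proof (rule sum.mono_neutral_right)
    show "finite {p. p permutes {..<n}}"
      by (rule finite_permutations) simp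
    show "cycle_perm ` Pow Cyc \<subseteq> {p. p permutes {..<n}}"
      using cycle_perm_permutes_and_sign by auto
    show "\<forall>p\<in>{p. p permutes {..<n}} - cycle_perm ` Pow Cyc. leibniz p = 0"
    proof
      fix p assume p: "p \<in> {p. p permutes {..<n}} - cycle_perm ` Pow Cyc"
      then have "\<not> moves_along_edges A p"
        using eq_cycle_perm_moved_cycles by blast
      then show "leibniz p = 0"
        using p leibniz_term_vanishes unfolding leibniz_def by simp
    qed
  qed
  also have "\<dots> = (\<Sum>T\<in>Pow Cyc. leibniz (cycle_perm T))"
    by (rule sum.reindex[OF inj_on_cycle_perm, unfolded comp_def])
  also have "\<dots> = (\<Sum>T\<in>Pow Cyc. [:0, 1:] ^ (n - sum card T)
                     * (\<Prod>C\<in>T. - [:complex_of_int (cycle_sign A C):]))"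
    using leibniz_term_cycle_perm unfolding leibniz_def by (intro sum.cong) auto
  finally show ?thesis .
qed

lemma sum_card_cycles_le: "sum card Cyc \<le> n"
  using card_covered[of Cyc] covered_subset[of Cyc] by (metis card_lessThan card_mono finite_lessThan order_refl)

lemma char_poly_factorization:
  "char_poly (map_mat complex_of_int A)
     = [:0, 1:] ^ (n - sum card Cyc) * (\<Prod>C\<in>Cyc. [:0, 1:] ^ card C - [:complex_of_int (cycle_sign A C):])"
  unfolding char_poly_eq_sum_cycle_sets by (rule sum_Pow_power_mult_prod[OF finite_cycles sum_card_cycles_le])

lemma spectrum_mset_eq_cycle_roots:
  "spectrum_mset A = replicate_mset (n - sum card Cyc) 0
     + (\<Sum>C\<in>Cyc. if cycle_sign A C = 1 then roots_of_unity (card C) else roots_of_minus_one (card C))"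
proof -
  let ?factor = "\<lambda>C. [:0, 1:] ^ card C - [:complex_of_int (cycle_sign A C):]"
  have nonzero: "?factor C \<noteq> 0" if "C \<in> Cyc" for C
    using card_cycle_ge_3[OF that] by (intro pX_power_minus_const_nonzero) simp
  have "proots (\<Prod>C\<in>Cyc. ?factor C) = (\<Sum>C\<in>Cyc. proots (?factor C))"
    by (rule proots_prod) (rule nonzero)
  also have "\<dots> = (\<Sum>C\<in>Cyc. if cycle_sign A C = 1 then roots_of_unity (card C)
                               else roots_of_minus_one (card C))"
    using proots_pX_power_minus_sign[OF cycle_sign_in_plus_minus_one] by (intro sum.cong) auto
  finally have roots: "proots (\<Prod>C\<in>Cyc. ?factor C)
      = (\<Sum>C\<in>Cyc. if cycle_sign A C = 1 then roots_of_unity (card C) else roots_of_minus_one (card C))" .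
  have "(\<Prod>C\<in>Cyc. ?factor C) \<noteq> 0"
    using nonzero finite_cycles by simp
  then show ?thesis
    unfolding spectrum_mset_def char_poly_factorization
    by (subst proots_mult) (simp_all add: roots proots_pX_power)
qed

lemma sum_cycles_by_length_and_sign:
  "(\<Sum>C\<in>Cyc. g C)
     = (\<Sum>k=3..n. sum g (cycles_of_len n A k 1) + sum g (cycles_of_len n A k (-1)))"
proof -
  have "(\<Sum>C\<in>Cyc. g C) = (\<Sum>k\<in>{3..n}. \<Sum>C\<in>{C \<in> Cyc. card C = k}. g C)"
    using card_cycle_ge_3 card_cycle_le by (intro sum.group[symmetric] finite_cycles) auto
  also have "\<dots> = (\<Sum>k=3..n. sum g (cycles_of_len n A k 1) + sum g (cycles_of_len n A k (-1)))"
  proof (rule sum.cong)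
    fix k
    have "{C \<in> Cyc. card C = k} = cycles_of_len n A k 1 \<union> cycles_of_len n A k (-1)"
      unfolding cycles_of_len_def using cycle_sign_in_plus_minus_one by auto
    moreover have "finite (cycles_of_len n A k s)" for s
      unfolding cycles_of_len_def using finite_cycles by simp
    moreover have "cycles_of_len n A k 1 \<inter> cycles_of_len n A k (-1) = {}"
      unfolding cycles_of_len_def by auto
    ultimately show "(\<Sum>C\<in>{C \<in> Cyc. card C = k}. g C)
        = sum g (cycles_of_len n A k 1) + sum g (cycles_of_len n A k (-1))"
      by (simp add: sum.union_disjoint)
  qed simp
  finally show ?thesis .
qed

lemma sum_card_cycles: "sum card Cyc = (\<Sum>k=3..n. k * (cpos n A k + cneg n A k))"
proof -
  have "sum card (cycles_of_len n A k s) = k * card (cycles_of_len n A k s)" for k s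
    unfolding cycles_of_len_def by simp
  then show ?thesis
    unfolding sum_cycles_by_length_and_sign[of card] cpos_def cneg_def
    by (simp add: add_mult_distrib2)
qed

lemma sum_cycle_roots:
  "(\<Sum>C\<in>Cyc. if cycle_sign A C = 1 then roots_of_unity (card C) else roots_of_minus_one (card C))
     = (\<Sum>k=3..n. repeat_mset (cpos n A k) (roots_of_unity k)
                  + repeat_mset (cneg n A k) (roots_of_minus_one k))"
proof -
  have "(\<Sum>C\<in>cycles_of_len n A k s. if cycle_sign A C = 1 then roots_of_unity (card C)
          else roots_of_minus_one (card C))
      = repeat_mset (card (cycles_of_len n A k s)) (if s = 1 then roots_of_unity k else roots_of_minus_one k)"
    for k s
    unfolding sum_const_multiset[symmetric] cycles_of_len_def by (rule sum.cong) auto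
  then show ?thesis
    unfolding sum_cycles_by_length_and_sign cpos_def cneg_def by simp
qed

end

theorem proposition1:
  fixes n :: nat and A :: "int mat"
  assumes "signed_adj n A"
    and "no_self_loops n A"
    and "no_dual_edges n A"
    and "cycle_disjoint n A"
  shows "spectrum_mset A =
           replicate_mset (n - (\<Sum>k=3..n. k * (cpos n A k + cneg n A k))) 0
           + (\<Sum>k=3..n. repeat_mset (cpos n A k) (roots_of_unity k)
                        + repeat_mset (cneg n A k) (roots_of_minus_one k))"
proof -
  interpret cycle_disjoint_signed_digraph n A
    using assms by unfold_locales
  show ?thesis
    using spectrum_mset_eq_cycle_roots unfolding sum_card_cycles sum_cycle_roots .
qed

end
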